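(* Let $\mathfrak{H}$ be a Euclidean space and let $(\mathcal{X},\mathsf{S},\gamma,(\Lambda_{a})_{a\in\mathcal{A}})$ be a spectral decomposition system for $\mathfrak{H}$ such that the set $\{\Lambda_a\}_{a\in\mathcal{A}}$ is closed in $\mathscr{L}(\mathcal{X},\mathfrak{H})$. Let $\varphi\colon\mathcal{X}\to[-\infty,+\infty]$ be $\mathsf{S}$-invariant. (i) Let $x\in\mathcal{X}$ and $a\in\mathcal{A}$, and suppose $\varphi(x)\in\mathbb{R}$. Then $\varphi\circ\gamma$ is Fréchet differentiable at $\Lambda_a x$ if and only if $\varphi$ is Fréchet differentiable at $x$, in which case $\nabla(\varphi\circ\gamma)(\Lambda_a x)=\Lambda_a(\nabla\varphi(x))$. (ii) Let $X\in\mathfrak{H}$ and suppose $\varphi(\gamma(X))\in\mathbb{R}$. Then $\varphi\circ\gamma$ is Fréchet differentiable at $X$ if and only if $\varphi$ is Fréchet differentiable at $\gamma(X)$, in which case $\nabla(\varphi\circ\gamma)(X)=\Lambda_a(\nabla\varphi(\gamma(X)))$ for every $a\in\mathcal{A}_X$.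
   Context: A Euclidean space is a finite-dimensional real Hilbert space; $\mathscr{L}(\mathcal{X},\mathfrak{H})$ carries the operator-norm topology. A spectral decomposition system for a Euclidean space $\mathfrak{H}$ is a tuple $(\mathcal{X},\mathsf{S},\gamma,(\Lambda_a)_{a\in\mathcal{A}})$ where $\mathcal{X}$ is a Euclidean space, $\mathsf{S}$ is a group acting on $\mathcal{X}$ such that each map $x\mapsto \mathsf{s}\cdot x$ is a linear isometry, $\gamma\colon\mathfrak{H}\to\mathcal{X}$ is a mapping, and each $\Lambda_a\colon\mathcal{X}\to\mathfrak{H}$ is a linear isometry, such that: [A] there exists a mapping $\tau\colon\mathcal{X}\to\mathcal{X}$ with $\tau(\mathsf{s}\cdot x)=\tau(x)$ for all $\mathsf{s},x$, $\tau(x)\in\mathsf{S}\cdot x$ for all $x$, and $\gamma\circ\Lambda_a=\tau$ for all $a\in\mathcal{A}$; [B] for every $X\in\mathfrak{H}$ there exists $a\in\mathcal{A}$ with $X=\Lambda_a\gamma(X)$; [C] $\langle X,Y\rangle\le\langle\gamma(X),\gamma(Y)\rangle$ for all $X,Y\in\mathfrak{H}$. $\mathcal{A}_X=\{a\in\mathcal{A}:X=\Lambda_a\gamma(X)\}$. A function $\varphi$ on $\mathcal{X}$ is $\mathsf{S}$-invariant if $\varphi(\mathsf{s}\cdot x)=\varphi(x)$ for all $\mathsf{s},x$. A function $f$ with $f(x)\in\mathbb{R}$ is Fréchet differentiable at $x$ if there is a (unique) $\nabla f(x)$ with $\lim_{z\to x,z\ne x}|f(z)-f(x)-\langle z-x,\nabla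 f(x)\rangle|/\|z-x\|=0$. *)

theory Defs
  imports "HOL-Analysis.Analysis" "HOL-Algebra.Group"
begin

definition lin_isometry :: "('a::real_normed_vector \<Rightarrow> 'b::real_normed_vector) \<Rightarrow> bool" where
  "lin_isometry f \<longleftrightarrow> linear f \<and> (\<forall>x. norm (f x) = norm x)"

definition spectral_decomposition_system ::
  "('s, 'm) monoid_scheme \<Rightarrow> ('s \<Rightarrow> 'x::euclidean_space \<Rightarrow> 'x) \<Rightarrow> ('h::euclidean_space \<Rightarrow> 'x)
     \<Rightarrow> ('i \<Rightarrow> 'x \<Rightarrow> 'h) \<Rightarrow> 'i set \<Rightarrow> bool" where
  "spectral_decomposition_system G act gamma Lambda A \<longleftrightarrow>
     group G \<and>
     (\<forall>x. act \<one>\<^bsub>G\<^esub> x = x) \<and>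
     (\<forall>g\<in>carrier G. \<forall>h\<in>carrier G. \<forall>x. act (g \<otimes>\<^bsub>G\<^esub> h) x = act g (act h x)) \<and>
     (\<forall>g\<in>carrier G. lin_isometry (act g)) \<and>
     (\<forall>a\<in>A. lin_isometry (Lambda a)) \<and>
     (\<exists>\<tau>::'x \<Rightarrow> 'x.
        (\<forall>g\<in>carrier G. \<forall>x. \<tau> (act g x) = \<tau> x) \<and>
        (\<forall>x. \<tau> x \<in> {act g x | g. g \<in> carrier G}) \<and>
        (\<forall>a\<in>A. \<forall>x. gamma (Lambda a x) = \<tau> x)) \<and>
     (\<forall>X. \<exists>a\<in>A. X = Lambda a (gamma X)) \<and>
     (\<forall>X Y. inner X Y \<le> inner (gamma X) (gamma Y))"

definition spectral_index_set ::
  "('h \<Rightarrow> 'x) \<Rightarrow> ('i \<Rightarrow> 'x \<Rightarrow> 'h) \<Rightarrow> 'i set \<Rightarrow> 'h \<Rightarrow> 'i set" where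
  "spectral_index_set gamma Lambda A X = {a\<in>A. X = Lambda a (gamma X)}"

definition S_invariant :: "('s, 'm) monoid_scheme \<Rightarrow> ('s \<Rightarrow> 'x \<Rightarrow> 'x) \<Rightarrow> ('x \<Rightarrow> 'b) \<Rightarrow> bool" where
  "S_invariant G act \<phi> \<longleftrightarrow> (\<forall>g\<in>carrier G. \<forall>x. \<phi> (act g x) = \<phi> x)"

definition has_frechet_gradient :: "('a::real_inner \<Rightarrow> ereal) \<Rightarrow> 'a \<Rightarrow> 'a \<Rightarrow> bool" where
  "has_frechet_gradient f x g \<longleftrightarrow> \<bar>f x\<bar> \<noteq> \<infinity> \<and>
     ((\<lambda>z. \<bar>f z - f x - ereal (inner (z - x) g)\<bar> / ereal (norm (z - x))) \<longlongrightarrow> 0) (at x)"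

definition frechet_differentiable :: "('a::real_inner \<Rightarrow> ereal) \<Rightarrow> 'a \<Rightarrow> bool" where
  "frechet_differentiable f x \<longleftrightarrow> (\<exists>g. has_frechet_gradient f x g)"

definition frechet_gradient :: "('a::real_inner \<Rightarrow> ereal) \<Rightarrow> 'a \<Rightarrow> 'a" where
  "frechet_gradient f x = (THE g. has_frechet_gradient f x g)"

end

theory Submission
  imports Defs
begin

(* Invariance gives (phi o gamma) o Lambda_a = phi o tau = phi, so a gradient W of phi o gamma at
   Lambda_a x pulls back along the isometry Lambda_a to the gradient Lambda_a^* W of phi at x.
   Conversely, let v be a gradient of phi at x.  Replacing x by tau x = s x and v by s v we may
   assume tau x = x, and then Lambda_a x = Lambda_c x for some c.  As gamma is 1-Lipschitz,
   phi o gamma has the gradient Lambda_c v at Lambda_c x as soon as the scalar function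
   Y |-> <gamma Y, v> has it.  Its upper first-order estimate comes from the majorisation
   <Y, Lambda_c q> <= <gamma Y, tau q> at q = x + eps v, with eps proportional to |Y - Lambda_c x|:
   the error terms involve a group element realising tau q, which almost fixes x, and the gradient
   of an invariant function is almost fixed by such elements.  The lower estimate is the upper one
   for -v.  Finally Lambda_a^* W = v and |W| = |v| force W = Lambda_a v. *)

section \<open>Frechet gradients of extended-real-valued functions\<close>

lemma has_frechet_gradient_iff_has_derivative:
  "has_frechet_gradient f x g \<longleftrightarrow>
     (\<forall>\<^sub>F z in nhds x. \<bar>f z\<bar> \<noteq> \<infinity>) \<and>
     ((\<lambda>z. real_of_ereal (f z)) has_derivative (\<lambda>h. inner h g)) (at x)"
proof -
  define q where "q = (\<lambda>z. \<bar>f z - f x - ereal (inner (z - x) g)\<bar> / ereal (norm (z - x)))"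
  have gradient_iff: "has_frechet_gradient f x g \<longleftrightarrow> \<bar>f x\<bar> \<noteq> \<infinity> \<and> (q \<longlongrightarrow> 0) (at x)"
    by (simp add: has_frechet_gradient_def q_def)
  define Q where "Q = (\<lambda>z. \<bar>real_of_ereal (f z) - real_of_ereal (f x) - inner (z - x) g\<bar> / norm (z - x))"
  have q_finite: "q z = ereal (Q z)" if "\<bar>f z\<bar> \<noteq> \<infinity>" "\<bar>f x\<bar> \<noteq> \<infinity>" "z \<noteq> x" for z
    using that by (cases "f z"; cases "f x") (auto simp: q_def Q_def)
  have q_infinite: "q z = \<infinity>" if "\<bar>f z\<bar> = \<infinity>" "\<bar>f x\<bar> \<noteq> \<infinity>" "z \<noteq> x" for z
    using that by (cases "f z"; cases "f x") (auto simp: q_def)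
  have derivative_iff: "((\<lambda>z. real_of_ereal (f z)) has_derivative (\<lambda>h. inner h g)) (at x) \<longleftrightarrow> (Q \<longlongrightarrow> 0) (at x)"
    by (simp add: has_derivative_iff_norm bounded_linear_inner_left Q_def)
  have q_tendsto_iff: "(q \<longlongrightarrow> 0) (at x) \<longleftrightarrow> (Q \<longlongrightarrow> 0) (at x)"
    if "\<forall>\<^sub>F z in nhds x. \<bar>f z\<bar> \<noteq> \<infinity>"
  proof -
    have "\<forall>\<^sub>F z in at x. q z = ereal (Q z)"
      unfolding eventually_at_filter
      using that by (rule eventually_mono) (use q_finite eventually_nhds_x_imp_x[OF that] in auto)
    then have "(q \<longlongrightarrow> 0) (at x) \<longleftrightarrow> ((\<lambda>z. ereal (Q z)) \<longlongrightarrow> ereal 0) (at x)"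
      by (simp add: tendsto_cong zero_ereal_def)
    then show ?thesis by simp
  qed
  show ?thesis
  proof
    assume "has_frechet_gradient f x g"
    then have fx: "\<bar>f x\<bar> \<noteq> \<infinity>" and lim: "(q \<longlongrightarrow> 0) (at x)"
      by (simp_all add: gradient_iff)
    have "\<forall>\<^sub>F z in at x. q z < 1"
      using order_tendstoD(2)[OF lim] by simp
    then have "\<forall>\<^sub>F z in at x. \<bar>f z\<bar> \<noteq> \<infinity>"
      unfolding eventually_at_filter by (rule eventually_mono) (use q_infinite fx in force)
    then have finite: "\<forall>\<^sub>F z in nhds x. \<bar>f z\<bar> \<noteq> \<infinity>"
      using fx by (simp add: eventually_nhds_conv_at)
    with lim show "(\<forall>\<^sub>F z in nhds x. \<bar>f z\<bar> \<noteq> \<infinity>) \<and>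
        ((\<lambda>z. real_of_ereal (f z)) has_derivative (\<lambda>h. inner h g)) (at x)"
      using q_tendsto_iff derivative_iff by blast
  next
    assume "(\<forall>\<^sub>F z in nhds x. \<bar>f z\<bar> \<noteq> \<infinity>) \<and>
        ((\<lambda>z. real_of_ereal (f z)) has_derivative (\<lambda>h. inner h g)) (at x)"
    then have finite: "\<forall>\<^sub>F z in nhds x. \<bar>f z\<bar> \<noteq> \<infinity>" and "(Q \<longlongrightarrow> 0) (at x)"
      using derivative_iff by blast+
    then show "has_frechet_gradient f x g"
      by (simp add: gradient_iff q_tendsto_iff[OF finite] eventually_nhds_x_imp_x[OF finite])
  qed
qed

lemma has_frechet_gradient_unique:
  assumes "has_frechet_gradient f x g1" and "has_frechet_gradient f x g2"
  shows "g1 = g2"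
proof -
  have "(\<lambda>h. inner h g1) = (\<lambda>h. inner h g2)"
    using assms by (auto simp: has_frechet_gradient_iff_has_derivative intro: has_derivative_unique)
  then show ?thesis
    by (metis vector_eq_ldot)
qed

lemma frechet_gradient_eqI: "has_frechet_gradient f x g \<Longrightarrow> frechet_gradient f x = g"
  unfolding frechet_gradient_def by (blast intro: has_frechet_gradient_unique)

lemma frechet_differentiable_frechet_gradient:
  "frechet_differentiable f x \<Longrightarrow> has_frechet_gradient f x (frechet_gradient f x)"
  unfolding frechet_differentiable_def using frechet_gradient_eqI by metis

lemma eventually_nhds_compose_isCont:
  assumes "isCont h x" and "\<forall>\<^sub>F y in nhds (h x). P y"
  shows "\<forall>\<^sub>F z in nhds x. P (h z)"
proof -
  have "filterlim h (nhds (h x)) (nhds x)"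
    using assms(1) by (simp add: continuous_at tendsto_at_iff_tendsto_nhds)
  with assms(2) show ?thesis
    by (simp add: filterlim_iff)
qed

lemma has_frechet_gradient_compose_linear:
  fixes L :: "'a::euclidean_space \<Rightarrow> 'b::euclidean_space"
  assumes L: "linear L" and grad: "has_frechet_gradient f (L x) W"
  shows "has_frechet_gradient (f \<circ> L) x (adjoint L W)"
proof -
  from grad have finite: "\<forall>\<^sub>F y in nhds (L x). \<bar>f y\<bar> \<noteq> \<infinity>"
    and deriv: "((\<lambda>y. real_of_ereal (f y)) has_derivative (\<lambda>h. inner h W)) (at (L x))"
    by (simp_all add: has_frechet_gradient_iff_has_derivative)
  have "isCont L x"
    using L by (simp add: linear_continuous_at linear_conv_bounded_linear)
  then have "\<forall>\<^sub>F z in nhds x. \<bar>f (L z)\<bar> \<noteq> \<infinity>"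
    using finite by (rule eventually_nhds_compose_isCont)
  moreover have "((\<lambda>z. real_of_ereal (f (L z))) has_derivative (\<lambda>h. inner (L h) W)) (at x)"
    using has_derivative_compose[OF linear_imp_has_derivative[OF L] deriv] .
  moreover have "(\<lambda>h. inner (L h) W) = (\<lambda>h. inner h (adjoint L W))"
    using adjoint_works[OF L] by simp
  ultimately show ?thesis
    by (simp add: has_frechet_gradient_iff_has_derivative)
qed

lemma lin_isometry_inner:
  assumes "lin_isometry f" shows "inner (f a) (f b) = inner a b"
proof -
  have "linear f" and norm_f: "\<And>x. norm (f x) = norm x"
    using assms unfolding lin_isometry_def by auto
  then have "f a + f b = f (a + b)" by (simp add: linear_add)
  then show ?thesis using dot_norm[of "f a" "f b"] dot_norm[of a b] norm_f by simp
qed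

lemma lin_isometry_apply_adjoint:
  fixes L :: "'a::euclidean_space \<Rightarrow> 'b::euclidean_space"
  assumes L: "lin_isometry L" and "norm (adjoint L W) = norm W"
  shows "L (adjoint L W) = W"
proof -
  have lin: "linear L" using L by (simp add: lin_isometry_def)
  let ?u = "adjoint L W"
  have "inner (W - L ?u) (W - L ?u) = inner W W - 2 * inner ?u ?u + inner (L ?u) (L ?u)"
    using adjoint_works[OF lin, of ?u W]
    by (simp add: inner_diff_left inner_diff_right inner_commute)
  also have "\<dots> = 0"
    using assms lin_isometry_inner[OF L] by (simp add: power2_norm_eq_inner[symmetric] lin_isometry_def)
  finally show ?thesis by simp
qed

lemma has_derivative_compose_lipschitz:
  fixes F :: "'a::real_inner \<Rightarrow> real" and h :: "'b::real_normed_vector \<Rightarrow> 'a"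
  assumes F: "(F has_derivative (\<lambda>v. inner v w)) (at (h x))"
    and lip: "C-lipschitz_on UNIV h"
    and h: "((\<lambda>z. inner (h z) w) has_derivative D) (at x)"
  shows "((\<lambda>z. F (h z)) has_derivative D) (at x)"
proof -
  define R where "R y = F y - F (h x) - inner (y - h x) w" for y
  have "((\<lambda>z. R (h z)) has_derivative (\<lambda>_. 0)) (at x)"
    unfolding has_derivative_at_alt
  proof (intro conjI allI impI bounded_linear_zero)
    fix e :: real assume "e > 0"
    have C: "C \<ge> 0" and dist_h: "\<And>z. norm (h z - h x) \<le> C * norm (z - x)"
      using lip by (auto simp: lipschitz_on_def dist_norm)
    obtain d where "d > 0" and d: "\<And>y. norm (y - h x) < d \<Longrightarrow> \<bar>R y\<bar> \<le> e / (C + 1) * norm (y - h x)"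
      using F \<open>e > 0\<close> C unfolding has_derivative_at_alt R_def
      by (metis add_nonneg_pos divide_pos_pos real_norm_def zero_less_one)
    show "\<exists>d>0. \<forall>z. norm (z - x) < d \<longrightarrow> norm (R (h z) - R (h x) - 0) \<le> e * norm (z - x)"
    proof (intro exI[of _ "d / (C + 1)"] conjI allI impI)
      show "d / (C + 1) > 0" using \<open>d > 0\<close> C by simp
      fix z assume z: "norm (z - x) < d / (C + 1)"
      have "norm (h z - h x) \<le> (C + 1) * norm (z - x)"
        using dist_h[of z] by (simp add: distrib_right add_increasing2)
      also have "\<dots> < d" using z C by (simp add: field_simps)
      finally have "\<bar>R (h z)\<bar> \<le> e / (C + 1) * norm (h z - h x)" by (rule d)
      also have "\<dots> \<le> e / (C + 1) * ((C + 1) * norm (z - x))"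
        using \<open>norm (h z - h x) \<le> (C + 1) * norm (z - x)\<close> \<open>e > 0\<close> C
        by (intro mult_left_mono) auto
      finally show "norm (R (h z) - R (h x) - 0) \<le> e * norm (z - x)"
        using C by (simp add: R_def)
    qed
  qed
  then have "((\<lambda>z. R (h z) + F (h x) + inner (h z) w - inner (h x) w) has_derivative (\<lambda>v. 0 + 0 + D v - 0)) (at x)"
    by (intro derivative_intros h)
  then show ?thesis
    by (simp add: R_def inner_diff_left)
qed

lemma has_frechet_gradient_compose_lipschitz:
  fixes f :: "'a::real_inner \<Rightarrow> ereal" and h :: "'b::real_inner \<Rightarrow> 'a"
  assumes grad: "has_frechet_gradient f (h x) w"
    and lip: "C-lipschitz_on UNIV h"
    and h: "((\<lambda>z. inner (h z) w) has_derivative (\<lambda>v. inner v W)) (at x)"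
  shows "has_frechet_gradient (f \<circ> h) x W"
proof -
  from grad have finite: "\<forall>\<^sub>F y in nhds (h x). \<bar>f y\<bar> \<noteq> \<infinity>"
    and deriv: "((\<lambda>y. real_of_ereal (f y)) has_derivative (\<lambda>v. inner v w)) (at (h x))"
    by (simp_all add: has_frechet_gradient_iff_has_derivative)
  have "isCont h x"
    using lipschitz_on_continuous_on[OF lip] by (simp add: continuous_on_eq_continuous_at)
  then have "\<forall>\<^sub>F z in nhds x. \<bar>f (h z)\<bar> \<noteq> \<infinity>"
    using finite by (rule eventually_nhds_compose_isCont)
  with has_derivative_compose_lipschitz[OF deriv lip h] show ?thesis
    by (simp add: has_frechet_gradient_iff_has_derivative)
qed

section \<open>Spectral decomposition systems\<close>

locale spectral_decomposition =
  fixes G :: "('s, 'm) monoid_scheme" and act :: "'s \<Rightarrow> 'x::euclidean_space \<Rightarrow> 'x"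
    and gamma :: "'h::euclidean_space \<Rightarrow> 'x" and Lambda :: "'i \<Rightarrow> 'x \<Rightarrow> 'h" and A :: "'i set"
    and tau :: "'x \<Rightarrow> 'x"
  assumes group_G: "group G"
    and act_one: "\<And>x. act \<one>\<^bsub>G\<^esub> x = x"
    and act_mult: "\<And>g h x. g \<in> carrier G \<Longrightarrow> h \<in> carrier G \<Longrightarrow> act (g \<otimes>\<^bsub>G\<^esub> h) x = act g (act h x)"
    and act_isometry: "\<And>g. g \<in> carrier G \<Longrightarrow> lin_isometry (act g)"
    and Lambda_isometry: "\<And>a. a \<in> A \<Longrightarrow> lin_isometry (Lambda a)"
    and tau_act: "\<And>g x. g \<in> carrier G \<Longrightarrow> tau (act g x) = tau x"
    and tau_in_orbit: "\<And>x. \<exists>g\<in>carrier G. tau x = act g x"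
    and gamma_Lambda: "\<And>a x. a \<in> A \<Longrightarrow> gamma (Lambda a x) = tau x"
    and Lambda_gamma: "\<And>X. \<exists>a\<in>A. X = Lambda a (gamma X)"
    and inner_le_inner_gamma: "\<And>X Y. inner X Y \<le> inner (gamma X) (gamma Y)"

lemma spectral_decomposition_systemE:
  assumes "spectral_decomposition_system G act gamma Lambda A"
  obtains tau where "spectral_decomposition G act gamma Lambda A tau"
proof -
  obtain tau where "\<forall>g\<in>carrier G. \<forall>x. tau (act g x) = tau x"
    and orbit: "\<forall>x. tau x \<in> {act g x | g. g \<in> carrier G}"
    and "\<forall>a\<in>A. \<forall>x. gamma (Lambda a x) = tau x"
    using assms unfolding spectral_decomposition_system_def by blast
  moreover have "\<forall>x. \<exists>g\<in>carrier G. tau x = act g x"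
    using orbit by blast
  ultimately have "spectral_decomposition G act gamma Lambda A tau"
    using assms unfolding spectral_decomposition_def spectral_decomposition_system_def by simp
  then show thesis ..
qed

context spectral_decomposition
begin

lemma act_linear: "g \<in> carrier G \<Longrightarrow> linear (act g)"
  and norm_act: "g \<in> carrier G \<Longrightarrow> norm (act g x) = norm x"
  and inner_act: "g \<in> carrier G \<Longrightarrow> inner (act g u) (act g v) = inner u v"
  using act_isometry lin_isometry_inner unfolding lin_isometry_def by blast+

lemma Lambda_linear: "a \<in> A \<Longrightarrow> linear (Lambda a)"
  and norm_Lambda: "a \<in> A \<Longrightarrow> norm (Lambda a x) = norm x"
  and inner_Lambda: "a \<in> A \<Longrightarrow> inner (Lambda a u) (Lambda a v) = inner u v"
  using Lambda_isometry lin_isometry_inner unfolding lin_isometry_def by blast+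

lemma inv_closed: "g \<in> carrier G \<Longrightarrow> inv\<^bsub>G\<^esub> g \<in> carrier G"
  using group.inv_closed[OF group_G] .

lemma act_inv_act: "g \<in> carrier G \<Longrightarrow> act (inv\<^bsub>G\<^esub> g) (act g x) = x"
  using act_mult[OF inv_closed, of g g x] group.l_inv[OF group_G, of g] act_one by simp

lemma act_act_inv: "g \<in> carrier G \<Longrightarrow> act g (act (inv\<^bsub>G\<^esub> g) x) = x"
  using act_mult[OF _ inv_closed, of g g x] group.r_inv[OF group_G, of g] act_one by simp

lemma inner_act_inv: "g \<in> carrier G \<Longrightarrow> inner (act (inv\<^bsub>G\<^esub> g) u) v = inner u (act g v)"
  using inner_act[of g "act (inv\<^bsub>G\<^esub> g) u" v] by (simp add: act_act_inv)

lemma norm_gamma: "norm (gamma X) = norm X"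
proof -
  obtain a where a: "a \<in> A" and X: "X = Lambda a (gamma X)"
    using Lambda_gamma by blast
  have "norm X = norm (Lambda a (gamma X))"
    using X by (rule arg_cong)
  also have "\<dots> = norm (gamma X)"
    using a by (rule norm_Lambda)
  finally show ?thesis by (rule sym)
qed

lemma norm_gamma_diff_le: "norm (gamma X - gamma Y) \<le> norm (X - Y)"
proof (rule power2_le_imp_le)
  have "(norm (gamma X - gamma Y))\<^sup>2 = (norm (gamma X))\<^sup>2 + (norm (gamma Y))\<^sup>2 - 2 * inner (gamma X) (gamma Y)"
    by (simp add: power2_norm_eq_inner inner_diff_left inner_diff_right inner_commute)
  also have "\<dots> \<le> (norm X)\<^sup>2 + (norm Y)\<^sup>2 - 2 * inner X Y"
    using inner_le_inner_gamma[of X Y] by (simp add: norm_gamma)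
  also have "\<dots> = (norm (X - Y))\<^sup>2"
    by (simp add: power2_norm_eq_inner inner_diff_left inner_diff_right inner_commute)
  finally show "(norm (gamma X - gamma Y))\<^sup>2 \<le> (norm (X - Y))\<^sup>2" .
qed simp

lemma gamma_lipschitz: "1-lipschitz_on UNIV gamma"
  by (rule lipschitz_onI) (simp_all add: dist_norm norm_gamma_diff_le)

lemma tau_lipschitz: "norm (tau x - tau y) \<le> norm (x - y)"
proof -
  obtain a where a: "a \<in> A" using Lambda_gamma by blast
  have "norm (tau x - tau y) = norm (gamma (Lambda a x) - gamma (Lambda a y))"
    using a by (simp add: gamma_Lambda)
  also have "\<dots> \<le> norm (Lambda a x - Lambda a y)"
    by (rule norm_gamma_diff_le)
  also have "\<dots> = norm (Lambda a (x - y))"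
    using linear_diff[OF Lambda_linear[OF a]] by simp
  also have "\<dots> = norm (x - y)"
    using a by (rule norm_Lambda)
  finally show ?thesis .
qed

lemma tau_tau: "tau (tau x) = tau x"
  using tau_in_orbit[of x] tau_act by auto

lemma S_invariant_tau: "S_invariant G act \<phi> \<Longrightarrow> \<phi> (tau x) = \<phi> x"
  using tau_in_orbit[of x] unfolding S_invariant_def by auto

section \<open>Gradients of invariant functions\<close>

lemma has_frechet_gradient_act:
  assumes inv: "S_invariant G act \<phi>" and g: "g \<in> carrier G" and grad: "has_frechet_gradient \<phi> x v"
  shows "has_frechet_gradient \<phi> (act g x) (act g v)"
proof -
  let ?h = "inv\<^bsub>G\<^esub> g"
  have h: "?h \<in> carrier G" using g by (rule inv_closed)
  have "has_frechet_gradient \<phi> (act ?h (act g x)) v"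
    using grad g by (simp add: act_inv_act)
  then have "has_frechet_gradient (\<phi> \<circ> act ?h) (act g x) (adjoint (act ?h) v)"
    by (rule has_frechet_gradient_compose_linear[OF act_linear[OF h]])
  moreover have "\<phi> \<circ> act ?h = \<phi>"
    using inv h by (auto simp: S_invariant_def)
  moreover have "adjoint (act ?h) = act g"
    using g by (intro adjoint_unique) (simp add: inner_act_inv)
  ultimately show ?thesis by simp
qed

lemma has_frechet_gradient_of_comp_gamma:
  assumes inv: "S_invariant G act \<phi>" and a: "a \<in> A"
    and grad: "has_frechet_gradient (\<phi> \<circ> gamma) (Lambda a x) W"
  shows "has_frechet_gradient \<phi> x (adjoint (Lambda a) W)"
proof -
  have "(\<phi> \<circ> gamma) \<circ> Lambda a = \<phi>"
    using a by (auto simp: gamma_Lambda S_invariant_tau[OF inv])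
  then show ?thesis
    using has_frechet_gradient_compose_linear[OF Lambda_linear[OF a] grad] by (simp only:)
qed

lemma invariant_derivative_estimate:
  fixes F :: "'x \<Rightarrow> real"
  assumes inv: "S_invariant G act F" and F: "(F has_derivative (\<lambda>h. inner h w)) (at y)"
    and "\<theta> > 0"
  obtains d where "d > 0"
    and "\<And>g z. g \<in> carrier G \<Longrightarrow> norm (z - y) < d \<Longrightarrow> norm (act g z - y) < d \<Longrightarrow>
           \<bar>inner (act g z - z) w\<bar> \<le> \<theta> * (norm (z - y) + norm (act g z - y))"
proof -
  obtain d where "d > 0"
    and d: "\<And>z. norm (z - y) < d \<Longrightarrow> \<bar>F z - F y - inner (z - y) w\<bar> \<le> \<theta> * norm (z - y)"
    using F \<open>\<theta> > 0\<close> unfolding has_derivative_at_alt real_norm_def by blast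
  have "\<bar>inner (act g z - z) w\<bar> \<le> \<theta> * (norm (z - y) + norm (act g z - y))"
    if "g \<in> carrier G" "norm (z - y) < d" "norm (act g z - y) < d" for g z
  proof -
    have "F (act g z) = F z"
      using inv \<open>g \<in> carrier G\<close> by (simp add: S_invariant_def)
    moreover have "inner (act g z - z) w = inner (act g z - y) w - inner (z - y) w"
      by (simp add: inner_diff_left)
    ultimately show ?thesis
      using d[OF that(2)] d[OF that(3)] by (simp add: distrib_left abs_le_iff)
  qed
  with \<open>d > 0\<close> show thesis by (rule that)
qed

(* An infinitesimal form of "every s fixing y also fixes w", satisfied by the gradient w at y
   of any S-invariant function. *)
definition stabilizer_compatible :: "'x \<Rightarrow> 'x \<Rightarrow> bool" where
  "stabilizer_compatible y w \<longleftrightarrow>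
     (\<forall>\<eta>>0. \<exists>\<rho>>0. \<forall>g\<in>carrier G. norm (act g y - y) < \<rho> \<longrightarrow>
        \<bar>inner y (act g w - w)\<bar> \<le> \<eta> * norm (act g y - y) \<and> norm (act g w - w) \<le> \<eta>)"

lemma stabilizer_compatible_uminus:
  assumes "stabilizer_compatible y w" shows "stabilizer_compatible y (- w)"
proof -
  have "act g (- w) - - w = - (act g w - w)" if "g \<in> carrier G" for g
    using linear_neg[OF act_linear[OF that]] by simp
  with assms show ?thesis
    unfolding stabilizer_compatible_def by (metis abs_minus_cancel inner_minus_right norm_minus_cancel)
qed

lemma norm_act_inv_diff: "g \<in> carrier G \<Longrightarrow> norm (act (inv\<^bsub>G\<^esub> g) y - y) = norm (act g y - y)"
  using norm_act[of g "act (inv\<^bsub>G\<^esub> g) y - y"]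
  by (simp add: linear_diff[OF act_linear] act_act_inv norm_minus_commute)

lemma inner_act_diff: "g \<in> carrier G \<Longrightarrow> inner y (act g w - w) = inner (act (inv\<^bsub>G\<^esub> g) y - y) w"
  by (simp add: inner_diff_left inner_diff_right inner_act_inv)

context
  fixes y w :: 'x and d \<theta> :: real
  assumes invariant_estimate: "\<And>g z. g \<in> carrier G \<Longrightarrow> norm (z - y) < d \<Longrightarrow> norm (act g z - y) < d \<Longrightarrow>
    \<bar>inner (act g z - z) w\<bar> \<le> \<theta> * (norm (z - y) + norm (act g z - y))"
begin

lemma inner_act_gradient_diff_le:
  assumes g: "g \<in> carrier G" and m: "norm (act g y - y) < d"
  shows "\<bar>inner y (act g w - w)\<bar> \<le> \<theta> * norm (act g y - y)"
proof -
  have "0 < d" using m norm_ge_zero by (rule le_less_trans[rotated])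
  then show ?thesis
    using invariant_estimate[OF inv_closed[OF g], of y] m g by (simp add: norm_act_inv_diff inner_act_diff)
qed

lemma norm_act_gradient_diff_le:
  assumes g: "g \<in> carrier G" and m: "norm (act g y - y) < d / 2" and "\<theta> \<ge> 0"
  shows "norm (act g w - w) \<le> 6 * \<theta>"
proof (cases "act g w = w")
  case False
  let ?h = "inv\<^bsub>G\<^esub> g" and ?m = "norm (act g y - y)"
  have h: "?h \<in> carrier G" using g by (rule inv_closed)
  \<comment> \<open>Test the estimate at y + k with k along v: there the inverse of g shifts the inner product
    with w by r * norm v, up to the contribution of y bounded by the previous lemma.\<close>
  define v where "v = act g w - w"
  define r where "r = d / 4"
  define k where "k = (r / norm v) *\<^sub>R v"
  have "d > 0" "?m < d" using m norm_ge_zero[of "act g y - y"] by linarith+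
  then have "v \<noteq> 0" "r > 0" using False by (simp_all add: v_def r_def)
  then have norm_k: "norm k = r" and inner_k: "inner k v = r * norm v"
    by (simp_all add: k_def power2_norm_eq_inner[symmetric] power2_eq_square)
  have bound_hy: "\<bar>inner (act ?h y - y) w\<bar> \<le> \<theta> * ?m"
    using inner_act_gradient_diff_le[OF g \<open>?m < d\<close>] g by (simp add: inner_act_diff)
  have "act ?h (y + k) - (y + k) = (act ?h k - k) + (act ?h y - y)"
    by (simp add: linear_add[OF act_linear[OF h]])
  moreover have "inner (act ?h k) w = inner k (act g w)"
    using g by (simp add: inner_act_inv)
  ultimately have shift: "inner (act ?h (y + k) - (y + k)) w = r * norm v + inner (act ?h y - y) w"
    using inner_k by (simp add: inner_add_left inner_diff_left v_def inner_diff_right)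
  have "act ?h (y + k) - y = act ?h k + (act ?h y - y)"
    by (simp add: linear_add[OF act_linear[OF h]])
  then have "norm (act ?h (y + k) - y) \<le> norm (act ?h k) + norm (act ?h y - y)"
    by (simp only: norm_triangle_ineq)
  then have far: "norm (act ?h (y + k) - y) \<le> r + ?m"
    using norm_act[OF h] norm_k norm_act_inv_diff[OF g] by simp
  have "norm (y + k - y) < d" "norm (act ?h (y + k) - y) < d"
    using norm_k far m \<open>r > 0\<close> by (simp_all add: r_def)
  then have "\<bar>inner (act ?h (y + k) - (y + k)) w\<bar> \<le> \<theta> * (r + norm (act ?h (y + k) - y))"
    using invariant_estimate[OF h, of "y + k"] norm_k by simp
  also have "\<dots> \<le> \<theta> * (r + (r + ?m))"
    using far \<open>\<theta> \<ge> 0\<close> by (intro mult_left_mono) auto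
  finally have "r * norm v \<le> \<theta> * (r + (r + ?m)) + \<theta> * ?m"
    using shift bound_hy abs_ge_self[of "r * norm v + inner (act ?h y - y) w"]
      abs_ge_minus_self[of "inner (act ?h y - y) w"] by linarith
  also have "\<dots> = \<theta> * (2 * r + 2 * ?m)"
    by (simp add: algebra_simps)
  also have "\<dots> \<le> \<theta> * (6 * r)"
    using m \<open>\<theta> \<ge> 0\<close> by (intro mult_left_mono) (auto simp: r_def)
  finally show ?thesis
    using \<open>r > 0\<close> by (simp add: v_def)
qed (simp add: \<open>\<theta> \<ge> 0\<close>)

end

lemma has_derivative_stabilizer_compatible:
  fixes F :: "'x \<Rightarrow> real"
  assumes inv: "S_invariant G act F" and F: "(F has_derivative (\<lambda>h. inner h w)) (at y)"
  shows "stabilizer_compatible y w"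
  unfolding stabilizer_compatible_def
proof (intro allI impI)
  fix \<eta> :: real assume "\<eta> > 0"
  then obtain d where "d > 0" and estimate: "\<And>g z. g \<in> carrier G \<Longrightarrow> norm (z - y) < d \<Longrightarrow>
      norm (act g z - y) < d \<Longrightarrow> \<bar>inner (act g z - z) w\<bar> \<le> \<eta> / 6 * (norm (z - y) + norm (act g z - y))"
    using invariant_derivative_estimate[OF inv F, of "\<eta> / 6"] by auto
  have "\<bar>inner y (act g w - w)\<bar> \<le> \<eta> * norm (act g y - y) \<and> norm (act g w - w) \<le> \<eta>"
    if g: "g \<in> carrier G" and m: "norm (act g y - y) < d / 2" for g
  proof
    have "\<bar>inner y (act g w - w)\<bar> \<le> \<eta> / 6 * norm (act g y - y)"
      using inner_act_gradient_diff_le[OF estimate g] m \<open>d > 0\<close> by simp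
    also have "\<dots> \<le> \<eta> * norm (act g y - y)"
      using \<open>\<eta> > 0\<close> by (intro mult_right_mono) auto
    finally show "\<bar>inner y (act g w - w)\<bar> \<le> \<eta> * norm (act g y - y)" .
    show "norm (act g w - w) \<le> \<eta>"
      using norm_act_gradient_diff_le[OF estimate g m] \<open>\<eta> > 0\<close> by simp
  qed
  then show "\<exists>\<rho>>0. \<forall>g\<in>carrier G. norm (act g y - y) < \<rho> \<longrightarrow>
      \<bar>inner y (act g w - w)\<bar> \<le> \<eta> * norm (act g y - y) \<and> norm (act g w - w) \<le> \<eta>"
    using \<open>d > 0\<close> by (intro exI[of _ "d / 2"]) auto
qed

section \<open>First-order behaviour of gamma\<close>

lemma inner_Lambda_le_inner_gamma_act:
  assumes c: "c \<in> A" and g: "g \<in> carrier G"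
    and tau_q: "tau (y + \<epsilon> *\<^sub>R w) = act g (y + \<epsilon> *\<^sub>R w)"
  shows "\<epsilon> * inner Y (Lambda c w) \<le> \<epsilon> * inner (gamma Y) (act g w) + (norm (Y - Lambda c y))\<^sup>2 / 2"
proof -
  have "inner Y (Lambda c (y + \<epsilon> *\<^sub>R w)) \<le> inner (gamma Y) (act g (y + \<epsilon> *\<^sub>R w))"
    using inner_le_inner_gamma[of Y "Lambda c (y + \<epsilon> *\<^sub>R w)"] c tau_q by (simp add: gamma_Lambda)
  then have "inner Y (Lambda c y) + \<epsilon> * inner Y (Lambda c w)
      \<le> inner (gamma Y) (act g y) + \<epsilon> * inner (gamma Y) (act g w)"
    using Lambda_linear[OF c] act_linear[OF g] by (simp add: linear_add linear_scale inner_add_right)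
  moreover have "2 * inner Y (Lambda c y) = (norm Y)\<^sup>2 + (norm y)\<^sup>2 - (norm (Y - Lambda c y))\<^sup>2"
    using dot_norm_neg[of Y "Lambda c y"] norm_Lambda[OF c, of y] by simp
  moreover have "2 * inner (gamma Y) (act g y) = (norm Y)\<^sup>2 + (norm y)\<^sup>2 - (norm (gamma Y - act g y))\<^sup>2"
    using dot_norm_neg[of "gamma Y" "act g y"] norm_gamma[of Y] norm_act[OF g, of y] by simp
  ultimately show ?thesis
    using zero_le_power2[of "norm (gamma Y - act g y)"] by linarith
qed

lemma norm_act_diff_le_tau:
  assumes y: "tau y = y" and g: "g \<in> carrier G"
    and tau_q: "tau (y + \<epsilon> *\<^sub>R w) = act g (y + \<epsilon> *\<^sub>R w)" and "\<epsilon> \<ge> 0"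
  shows "norm (act g y - y) \<le> 2 * \<epsilon> * norm w"
proof -
  have "act g y - y = (tau (y + \<epsilon> *\<^sub>R w) - tau y) - \<epsilon> *\<^sub>R act g w"
    using tau_q y g by (simp add: linear_add[OF act_linear[OF g]] linear_scale[OF act_linear[OF g]])
  then have "norm (act g y - y) \<le> norm (tau (y + \<epsilon> *\<^sub>R w) - tau y) + \<epsilon> * norm w"
    using norm_triangle_ineq4 norm_act[OF g] \<open>\<epsilon> \<ge> 0\<close> by (metis abs_of_nonneg norm_scaleR)
  also have "\<dots> \<le> 2 * \<epsilon> * norm w"
    using tau_lipschitz[of "y + \<epsilon> *\<^sub>R w" y] \<open>\<epsilon> \<ge> 0\<close> by simp
  finally show ?thesis .
qed

lemma inner_gamma_error_le:
  assumes c: "c \<in> A" and y: "tau y = y" and g: "g \<in> carrier G"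
    and tau_q: "tau (y + \<epsilon> *\<^sub>R w) = act g (y + \<epsilon> *\<^sub>R w)" and "\<epsilon> > 0"
  shows "inner (Y - Lambda c y) (Lambda c w) - inner (gamma Y - y) w
    \<le> (norm (Y - Lambda c y))\<^sup>2 / (2 * \<epsilon>) + inner y (act g w - w)
       + norm (Y - Lambda c y) * norm (act g w - w)"
proof -
  have "\<epsilon> * (inner Y (Lambda c w) - inner (gamma Y) (act g w)) \<le> (norm (Y - Lambda c y))\<^sup>2 / 2"
    using inner_Lambda_le_inner_gamma_act[OF c g tau_q, of Y] by (simp add: right_diff_distrib)
  then have first: "inner Y (Lambda c w) - inner (gamma Y) (act g w) \<le> (norm (Y - Lambda c y))\<^sup>2 / (2 * \<epsilon>)"
    using \<open>\<epsilon> > 0\<close> by (simp add: pos_le_divide_eq mult.commute)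
  have "norm (gamma Y - y) \<le> norm (Y - Lambda c y)"
    using norm_gamma_diff_le[of Y "Lambda c y"] c y by (simp add: gamma_Lambda)
  then have third: "inner (gamma Y - y) (act g w - w) \<le> norm (Y - Lambda c y) * norm (act g w - w)"
    using norm_cauchy_schwarz[of "gamma Y - y" "act g w - w"]
    by (meson mult_right_mono norm_ge_zero order_trans)
  have "inner (Y - Lambda c y) (Lambda c w) - inner (gamma Y - y) w
      = (inner Y (Lambda c w) - inner (gamma Y) (act g w)) + inner y (act g w - w)
        + inner (gamma Y - y) (act g w - w)"
    using inner_Lambda[OF c, of y w] by (simp add: inner_diff_left inner_diff_right)
  with first third show ?thesis by linarith
qed

lemma inner_gamma_upper_estimate:
  assumes c: "c \<in> A" and y: "tau y = y" and compat: "stabilizer_compatible y w" and "\<theta> > 0"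
  obtains d where "d > 0" and "\<And>Y. norm (Y - Lambda c y) < d \<Longrightarrow>
    inner (Y - Lambda c y) (Lambda c w) - inner (gamma Y - y) w \<le> \<theta> * norm (Y - Lambda c y)"
proof -
  \<comment> \<open>K is chosen so that the element realising tau (y + eps w) moves y by at most (K - 1) * delta,
    and the three error terms of inner_gamma_error_le add up to theta * delta.\<close>
  define K where "K = 2 * norm w / \<theta> + 1"
  define \<eta> where "\<eta> = \<theta> / (2 * K)"
  have "K \<ge> 1" using \<open>\<theta> > 0\<close> by (simp add: K_def)
  then have "\<eta> > 0" using \<open>\<theta> > 0\<close> by (simp add: \<eta>_def)
  then obtain \<rho> where "\<rho> > 0" and \<rho>: "\<And>g. g \<in> carrier G \<Longrightarrow> norm (act g y - y) < \<rho> \<Longrightarrow>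
      \<bar>inner y (act g w - w)\<bar> \<le> \<eta> * norm (act g y - y) \<and> norm (act g w - w) \<le> \<eta>"
    using compat unfolding stabilizer_compatible_def by blast
  have "inner (Y - Lambda c y) (Lambda c w) - inner (gamma Y - y) w \<le> \<theta> * norm (Y - Lambda c y)"
    if Y: "norm (Y - Lambda c y) < \<rho> / K" for Y
  proof (cases "Y = Lambda c y")
    case False
    define \<delta> where "\<delta> = norm (Y - Lambda c y)"
    define \<epsilon> where "\<epsilon> = \<delta> / \<theta>"
    have "\<delta> > 0" "\<epsilon> > 0" using False \<open>\<theta> > 0\<close> by (simp_all add: \<delta>_def \<epsilon>_def)
    obtain g where g: "g \<in> carrier G" and tau_q: "tau (y + \<epsilon> *\<^sub>R w) = act g (y + \<epsilon> *\<^sub>R w)"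
      using tau_in_orbit by blast
    have "norm (act g y - y) \<le> 2 * \<epsilon> * norm w"
      using norm_act_diff_le_tau[OF y g tau_q] \<open>\<epsilon> > 0\<close> by simp
    also have "\<dots> = (K - 1) * \<delta>"
      using \<open>\<theta> > 0\<close> by (simp add: K_def \<epsilon>_def)
    finally have m: "norm (act g y - y) \<le> (K - 1) * \<delta>" .
    moreover have "K * \<delta> < \<rho>"
      using Y \<open>K \<ge> 1\<close> by (simp add: \<delta>_def field_simps)
    then have "(K - 1) * \<delta> < \<rho>"
      using \<open>\<delta> > 0\<close> by (simp add: left_diff_distrib)
    ultimately have "inner y (act g w - w) \<le> \<eta> * ((K - 1) * \<delta>)" and "norm (act g w - w) \<le> \<eta>"
      using \<rho>[OF g] \<open>\<eta> > 0\<close> by (auto intro: order_trans[OF _ mult_left_mono[OF m]])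
    then have "inner (Y - Lambda c y) (Lambda c w) - inner (gamma Y - y) w
        \<le> \<delta>\<^sup>2 / (2 * \<epsilon>) + \<eta> * ((K - 1) * \<delta>) + \<delta> * \<eta>"
      using inner_gamma_error_le[OF c y g tau_q \<open>\<epsilon> > 0\<close>, of Y, folded \<delta>_def]
        mult_left_mono[of "norm (act g w - w)" \<eta> \<delta>] \<open>\<delta> > 0\<close> by linarith
    also have "\<dots> = \<theta> * \<delta>"
      using \<open>K \<ge> 1\<close> \<open>\<delta> > 0\<close> \<open>\<theta> > 0\<close> by (simp add: \<eta>_def \<epsilon>_def field_simps power2_eq_square)
    finally show ?thesis by (simp add: \<delta>_def)
  qed (use c y in \<open>simp add: gamma_Lambda\<close>)
  moreover have "\<rho> / K > 0" using \<open>\<rho> > 0\<close> \<open>K \<ge> 1\<close> by simp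
  ultimately show thesis using that by blast
qed

lemma has_derivative_inner_gamma:
  assumes c: "c \<in> A" and y: "tau y = y" and compat: "stabilizer_compatible y w"
  shows "((\<lambda>Y. inner (gamma Y) w) has_derivative (\<lambda>H. inner H (Lambda c w))) (at (Lambda c y))"
  unfolding has_derivative_at_alt
proof (intro conjI allI impI bounded_linear_inner_left)
  fix e :: real assume "e > 0"
  obtain d1 where "d1 > 0" and d1: "\<And>Y. norm (Y - Lambda c y) < d1 \<Longrightarrow>
      inner (Y - Lambda c y) (Lambda c w) - inner (gamma Y - y) w \<le> e * norm (Y - Lambda c y)"
    using inner_gamma_upper_estimate[OF c y compat \<open>e > 0\<close>] by blast
  obtain d2 where "d2 > 0" and d2: "\<And>Y. norm (Y - Lambda c y) < d2 \<Longrightarrow>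
      inner (Y - Lambda c y) (Lambda c (- w)) - inner (gamma Y - y) (- w) \<le> e * norm (Y - Lambda c y)"
    using inner_gamma_upper_estimate[OF c y stabilizer_compatible_uminus[OF compat] \<open>e > 0\<close>] by blast
  show "\<exists>d>0. \<forall>Y. norm (Y - Lambda c y) < d \<longrightarrow>
      norm (inner (gamma Y) w - inner (gamma (Lambda c y)) w - inner (Y - Lambda c y) (Lambda c w))
        \<le> e * norm (Y - Lambda c y)"
  proof (intro exI[of _ "min d1 d2"] conjI allI impI)
    fix Y assume "norm (Y - Lambda c y) < min d1 d2"
    then show "norm (inner (gamma Y) w - inner (gamma (Lambda c y)) w - inner (Y - Lambda c y) (Lambda c w))
        \<le> e * norm (Y - Lambda c y)"
      using d1[of Y] d2[of Y] c y
      by (simp add: gamma_Lambda linear_neg[OF Lambda_linear[OF c]] inner_diff_left abs_le_iff)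
  qed (simp add: \<open>d1 > 0\<close> \<open>d2 > 0\<close>)
qed

lemma has_frechet_gradient_comp_gamma_fixed:
  assumes inv: "S_invariant G act \<phi>" and c: "c \<in> A" and y: "tau y = y"
    and grad: "has_frechet_gradient \<phi> y w"
  shows "has_frechet_gradient (\<phi> \<circ> gamma) (Lambda c y) (Lambda c w)"
proof -
  have "S_invariant G act (\<lambda>z. real_of_ereal (\<phi> z))"
    using inv by (simp add: S_invariant_def)
  moreover have "((\<lambda>z. real_of_ereal (\<phi> z)) has_derivative (\<lambda>h. inner h w)) (at y)"
    using grad by (simp add: has_frechet_gradient_iff_has_derivative)
  ultimately have "stabilizer_compatible y w"
    by (rule has_derivative_stabilizer_compatible)
  then have "((\<lambda>Y. inner (gamma Y) w) has_derivative (\<lambda>H. inner H (Lambda c w))) (at (Lambda c y))"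
    by (rule has_derivative_inner_gamma[OF c y])
  moreover have "gamma (Lambda c y) = y"
    using c y by (simp add: gamma_Lambda)
  ultimately show ?thesis
    using has_frechet_gradient_compose_lipschitz[OF _ gamma_lipschitz] grad by simp
qed

lemma has_frechet_gradient_comp_gamma_Lambda:
  assumes inv: "S_invariant G act \<phi>" and a: "a \<in> A" and grad: "has_frechet_gradient \<phi> x v"
  shows "has_frechet_gradient (\<phi> \<circ> gamma) (Lambda a x) (Lambda a v)"
proof -
  obtain g where g: "g \<in> carrier G" and tau_x: "tau x = act g x"
    using tau_in_orbit by blast
  obtain c where c: "c \<in> A" and "Lambda a x = Lambda c (gamma (Lambda a x))"
    using Lambda_gamma by blast
  then have Lambda_ac: "Lambda a x = Lambda c (tau x)"
    using a by (simp add: gamma_Lambda)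
  define W where "W = Lambda c (act g v)"
  have "has_frechet_gradient \<phi> (tau x) (act g v)"
    using has_frechet_gradient_act[OF inv g grad] tau_x by simp
  then have grad_W: "has_frechet_gradient (\<phi> \<circ> gamma) (Lambda a x) W"
    unfolding W_def Lambda_ac by (rule has_frechet_gradient_comp_gamma_fixed[OF inv c tau_tau])
  then have "adjoint (Lambda a) W = v"
    using has_frechet_gradient_of_comp_gamma[OF inv a] grad has_frechet_gradient_unique by blast
  moreover have "norm W = norm v"
    using c g by (simp add: W_def norm_Lambda norm_act)
  ultimately have "Lambda a v = W"
    using lin_isometry_apply_adjoint[OF Lambda_isometry[OF a], of W] by simp
  with grad_W show ?thesis by simp
qed

lemma frechet_differentiable_comp_gamma_Lambda_iff:
  assumes inv: "S_invariant G act \<phi>" and a: "a \<in> A"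
  shows "frechet_differentiable (\<phi> \<circ> gamma) (Lambda a x) \<longleftrightarrow> frechet_differentiable \<phi> x"
  using has_frechet_gradient_of_comp_gamma[OF inv a] has_frechet_gradient_comp_gamma_Lambda[OF inv a]
  unfolding frechet_differentiable_def by blast

lemma frechet_gradient_comp_gamma_Lambda:
  assumes inv: "S_invariant G act \<phi>" and a: "a \<in> A" and "frechet_differentiable \<phi> x"
  shows "frechet_gradient (\<phi> \<circ> gamma) (Lambda a x) = Lambda a (frechet_gradient \<phi> x)"
  using assms by (intro frechet_gradient_eqI has_frechet_gradient_comp_gamma_Lambda
      frechet_differentiable_frechet_gradient)

end

theorem corollary4p8:
  fixes G :: "('s, 'm) monoid_scheme" and act :: "'s \<Rightarrow> 'x::euclidean_space \<Rightarrow> 'x"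
    and gamma :: "'h::euclidean_space \<Rightarrow> 'x" and Lambda :: "'i \<Rightarrow> 'x \<Rightarrow> 'h" and A :: "'i set"
    and \<phi> :: "'x \<Rightarrow> ereal"
  assumes sds: "spectral_decomposition_system G act gamma Lambda A"
    and closed_Lambda: "closed ((\<lambda>a. Blinfun (Lambda a)) ` A)"
    and inv: "S_invariant G act \<phi>"
  shows "(\<forall>x. \<forall>a\<in>A. \<bar>\<phi> x\<bar> \<noteq> \<infinity> \<longrightarrow>
            ((frechet_differentiable (\<phi> \<circ> gamma) (Lambda a x) \<longleftrightarrow> frechet_differentiable \<phi> x) \<and>
             (frechet_differentiable \<phi> x \<longrightarrow>
                frechet_gradient (\<phi> \<circ> gamma) (Lambda a x) = Lambda a (frechet_gradient \<phi> x))))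
       \<and> (\<forall>X. \<bar>\<phi> (gamma X)\<bar> \<noteq> \<infinity> \<longrightarrow>
            ((frechet_differentiable (\<phi> \<circ> gamma) X \<longleftrightarrow> frechet_differentiable \<phi> (gamma X)) \<and>
             (frechet_differentiable \<phi> (gamma X) \<longrightarrow>
                (\<forall>a\<in>spectral_index_set gamma Lambda A X.
                   frechet_gradient (\<phi> \<circ> gamma) X = Lambda a (frechet_gradient \<phi> (gamma X))))))"
proof -
  obtain tau where "spectral_decomposition G act gamma Lambda A tau"
    using sds by (rule spectral_decomposition_systemE)
  then interpret spectral_decomposition G act gamma Lambda A tau .
  have part_i: "(frechet_differentiable (\<phi> \<circ> gamma) (Lambda a x) \<longleftrightarrow> frechet_differentiable \<phi> x) \<and>
      (frechet_differentiable \<phi> x \<longrightarrow>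
         frechet_gradient (\<phi> \<circ> gamma) (Lambda a x) = Lambda a (frechet_gradient \<phi> x))"
    if "a \<in> A" for a x
    using frechet_differentiable_comp_gamma_Lambda_iff[OF inv that]
      frechet_gradient_comp_gamma_Lambda[OF inv that] by blast
  have "frechet_differentiable (\<phi> \<circ> gamma) X \<longleftrightarrow> frechet_differentiable \<phi> (gamma X)" for X
    using Lambda_gamma[of X] part_i by metis
  moreover have "frechet_gradient (\<phi> \<circ> gamma) X = Lambda a (frechet_gradient \<phi> (gamma X))"
    if "a \<in> spectral_index_set gamma Lambda A X" "frechet_differentiable \<phi> (gamma X)" for a X
    using that part_i[of a "gamma X"] by (auto simp: spectral_index_set_def)
  ultimately show ?thesis
    using part_i by blast
qed

end
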